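(* Consider the binary sequential learning model described in the context with signal accuracy $p\in(1/2,1)$. Let $\alpha=(1-p)/p$ and, for each integer $k\ge 2$, let $$v_k=\frac{1-\alpha^{\frac{k-2}{k-1}}}{1-\alpha^{\frac{k-2}{k-1}}+\alpha^{\frac{-1}{k-1}}-\alpha},\qquad \varepsilon_k=\log\frac{1-v_k}{v_k}.$$ Suppose that, subject to privacy budget $\varepsilon$, agents employ the randomized response strategy with flip probability $u(\varepsilon)=\frac{1}{1+e^{\varepsilon}}$ before a cascade. Then for $\varepsilon\in(\varepsilon_{k+1},\varepsilon_k]$ the information cascade threshold $k(\varepsilon)$ does not change (it equals $k$), and on this interval the probability of a correct cascade is increasing in $\varepsilon$.
   Context: Binary model: unknown state $\theta\in\{-1,+1\}$ with uniform prior; agents $n=1,2,\dots$ act in sequence; agent $n$ privately observes $s_n\in\{-1,+1\}$, i.i.d. given $\theta$ with $\mathbb{P}(s_n=\theta\mid\theta)=p$. Before a cascade, agent $n$'s intended action equals her signal, $a_n=s_n$, and she publicly reports $x_n=a_n$ with probability $1-u(\varepsilon)$ and $x_n=-a_n$ with probability $u(\varepsilon)$. Let $\rho(\varepsilon)=\frac{(1-u(\varepsilon))(1-p)+u(\varepsilon)p}{u(\varepsilon)(1-p)+p(1-u(\varepsilon))}$. The information cascade threshold is the integer $k(\varepsilon)=\lfloor\log_{\rho(\varepsilon)}\frac{1-p}{p}\rfloor+1$: it is the value of the difference between the number of $+1$ and $-1$ reports in the public history at which agents become indifferent to their private signals. An information cascade starts at the first agent whose observed history has (number of $+1$ reports)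 $-$ (number of $-1$ reports) equal to $+k(\varepsilon)$ or $-k(\varepsilon)$; from then on every agent takes and truthfully reports the action favored by the history ($+1$ or $-1$ respectively). The cascade is correct if this action equals $\theta$; the probability of a correct cascade is the probability of this event. *)

theory Defs
  imports Complex_Main
begin

definition rr_flip :: "real \<Rightarrow> real" where
  "rr_flip eps = 1 / (1 + exp eps)"

definition rho :: "real \<Rightarrow> real \<Rightarrow> real" where
  "rho p u = ((1 - u) * (1 - p) + u * p) / (u * (1 - p) + p * (1 - u))"

definition cascade_threshold :: "real \<Rightarrow> real \<Rightarrow> int" where
  "cascade_threshold p u = \<lfloor>log (rho p u) ((1 - p) / p)\<rfloor> + 1"

text \<open>Probability that a pre-cascade public report equals +1 given the state theta:
  the signal equals theta w.p. p, and the report flips the signal w.p. u.\<close>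
definition up_prob :: "real \<Rightarrow> real \<Rightarrow> int \<Rightarrow> real" where
  "up_prob p u theta =
     (if theta = 1 then p else 1 - p) * (1 - u) + (if theta = 1 then 1 - p else p) * u"

text \<open>absorb a k n d b: probability that the difference process (reports +1 minus
  reports -1), moving up w.p. a and down w.p. 1-a independently at each step and
  started at d, reaches the value b*k (b = +1 or -1) within n steps, where the
  process is stopped as soon as it reaches +k or -k (the start of a cascade).\<close>
fun absorb :: "real \<Rightarrow> int \<Rightarrow> nat \<Rightarrow> int \<Rightarrow> int \<Rightarrow> real" where
  "absorb a k 0 d b = (if d \<ge> k then (if b = 1 then 1 else 0)
                       else if d \<le> -k then (if b = -1 then 1 else 0) else 0)"
| "absorb a k (Suc n) d b = (if d \<ge> k then (if b = 1 then 1 else 0)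
                       else if d \<le> -k then (if b = -1 then 1 else 0)
                       else a * absorb a k n (d + 1) b + (1 - a) * absorb a k n (d - 1) b)"

definition correct_cascade_prob_k :: "real \<Rightarrow> real \<Rightarrow> int \<Rightarrow> real" where
  "correct_cascade_prob_k p u k =
     (\<Sum>theta\<in>{-1, 1::int}. (1/2) * lim (\<lambda>n. absorb (up_prob p u theta) k n 0 theta))"

definition correct_cascade_prob :: "real \<Rightarrow> real \<Rightarrow> real" where
  "correct_cascade_prob p eps =
     correct_cascade_prob_k p (rr_flip eps) (cascade_threshold p (rr_flip eps))"

definition v_k :: "real \<Rightarrow> nat \<Rightarrow> real" where
  "v_k p k = (let \<alpha> = (1 - p) / p in
     (1 - \<alpha> powr ((real k - 2) / (real k - 1))) /
     (1 - \<alpha> powr ((real k - 2) / (real k - 1)) + \<alpha> powr (-1 / (real k - 1)) - \<alpha>))"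

definition eps_k :: "real \<Rightarrow> nat \<Rightarrow> real" where
  "eps_k p k = ln ((1 - v_k p k) / v_k p k)"

text \<open>The interval (eps_{k+1}, eps_k]; for k = 2, v_2 = 0 and eps_2 = +infinity,
  so the interval is (eps_3, infinity).\<close>
definition eps_interval :: "real \<Rightarrow> nat \<Rightarrow> real set" where
  "eps_interval p k = {eps. eps_k p (k + 1) < eps \<and> (k = 2 \<or> eps \<le> eps_k p k)}"

end

theory Submission
  imports Defs
begin

text \<open>Before a cascade the difference of the reports performs a random walk that steps up
  with probability \<open>q = up_prob p u \<theta>\<close> and is absorbed at \<open>\<plusminus>k\<close>. Absorption probabilities are
  harmonic, so their increments form a geometric progression with ratio \<open>(1 - q) / q\<close>; this is
  gambler's ruin, and it gives the probability \<open>1 / (1 + \<rho>^k)\<close> of a correct cascade, where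
  \<open>\<rho> = rho p u\<close>. With \<open>\<alpha> = (1 - p) / p\<close> the threshold equals \<open>k\<close> exactly when
  \<open>\<alpha>^(1/(k-1)) \<le> \<rho> < \<alpha>^(1/k)\<close>, and \<open>v_k\<close> is the flip probability at which \<open>\<rho>\<close> reaches
  \<open>\<alpha>^(1/(k-1))\<close>, so \<open>eps_interval p k\<close> is exactly where the threshold is \<open>k\<close>.
  Since \<open>\<rho>\<close> increases with the flip probability and \<open>u(\<epsilon>)\<close> decreases in \<open>\<epsilon>\<close>,
  \<open>1 / (1 + \<rho>^k)\<close> increases in \<open>\<epsilon>\<close> on that interval.\<close>

lemma absorb_bounds:
  assumes "0 \<le> a" "a \<le> 1"
  shows "0 \<le> absorb a k n d b \<and> absorb a k n d b \<le> 1"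
proof (induction n arbitrary: d)
  case (Suc n)
  then have "a * absorb a k n (d + 1) b \<le> a" "(1 - a) * absorb a k n (d - 1) b \<le> 1 - a"
    using assms by (simp_all add: mult_left_le)
  with Suc assms show ?case by auto
qed simp

lemma incseq_absorb:
  assumes "0 \<le> a" "a \<le> 1"
  shows "incseq (\<lambda>n. absorb a k n d b)"
proof -
  have "absorb a k n d b \<le> absorb a k (Suc n) d b" for n
  proof (induction n arbitrary: d)
    case 0
    show ?case using absorb_bounds[OF assms] assms by auto
  next
    case (Suc n)
    have "a * absorb a k n (d + 1) b + (1 - a) * absorb a k n (d - 1) b
        \<le> a * absorb a k (Suc n) (d + 1) b + (1 - a) * absorb a k (Suc n) (d - 1) b"
      using assms by (intro add_mono mult_left_mono Suc.IH) auto
    then show ?case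
      unfolding absorb.simps(2)[of a k "Suc n" d b] absorb.simps(2)[of a k n d b]
      by (simp del: absorb.simps)
  qed
  then show ?thesis by (rule incseq_SucI)
qed

definition absorption_prob :: "real \<Rightarrow> int \<Rightarrow> int \<Rightarrow> int \<Rightarrow> real" where
  "absorption_prob a k d b = lim (\<lambda>n. absorb a k n d b)"

lemma absorb_tendsto_absorption_prob:
  assumes "0 \<le> a" "a \<le> 1"
  shows "(\<lambda>n. absorb a k n d b) \<longlonglongrightarrow> absorption_prob a k d b"
proof -
  have "(\<lambda>n. absorb a k n d b) \<longlonglongrightarrow> (SUP n. absorb a k n d b)"
    using incseq_absorb[OF assms] absorb_bounds[OF assms]
    by (intro LIMSEQ_incseq_SUP) (auto simp: bdd_above_def intro!: exI[of _ 1])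
  then show ?thesis
    unfolding absorption_prob_def by (simp add: limI)
qed

lemma absorption_prob_harmonic:
  assumes "0 \<le> a" "a \<le> 1" "-k < d" "d < k"
  shows "absorption_prob a k d b
    = a * absorption_prob a k (d + 1) b + (1 - a) * absorption_prob a k (d - 1) b"
proof -
  have "(\<lambda>n. absorb a k (Suc n) d b) \<longlonglongrightarrow> absorption_prob a k d b"
    using absorb_tendsto_absorption_prob[OF assms(1,2)] by (rule LIMSEQ_Suc)
  moreover have "(\<lambda>n. absorb a k (Suc n) d b)
    \<longlonglongrightarrow> a * absorption_prob a k (d + 1) b + (1 - a) * absorption_prob a k (d - 1) b"
    using assms by (simp del: absorb.simps(1))
      (intro tendsto_intros absorb_tendsto_absorption_prob[OF assms(1,2)])
  ultimately show ?thesis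
    by (rule LIMSEQ_unique)
qed

lemma absorption_prob_upper:
  assumes "k \<le> d"
  shows "absorption_prob a k d 1 = 1"
proof -
  have "absorb a k n d 1 = 1" for n
    using assms by (cases n) auto
  then show ?thesis
    by (simp add: absorption_prob_def)
qed

lemma absorption_prob_lower:
  assumes "0 < k" "d \<le> -k"
  shows "absorption_prob a k d 1 = 0"
proof -
  have "absorb a k n d 1 = 0" for n
    using assms by (cases n) auto
  then show ?thesis
    by (simp add: absorption_prob_def)
qed

lemma absorb_mirror:
  assumes "0 < k"
  shows "absorb (1 - a) k n d (-1) = absorb a k n (-d) 1"
proof (induction n arbitrary: d)
  case (Suc n)
  have "-(d + 1) = -d - 1" "-(d - 1) = -d + 1"
    by simp_all
  with Suc[of "d + 1"] Suc[of "d - 1"] assms show ?case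
    by (simp only: absorb.simps) auto
qed (use assms in auto)

lemma absorption_prob_mirror:
  "0 < k \<Longrightarrow> absorption_prob (1 - a) k d (-1) = absorption_prob a k (-d) 1"
  by (simp add: absorption_prob_def absorb_mirror)

lemma harmonic_increment:
  fixes L :: "int \<Rightarrow> real"
  assumes "0 < a" "L d = a * L (d + 1) + (1 - a) * L (d - 1)"
  shows "L (d + 1) - L d = (1 - a) / a * (L d - L (d - 1))"
proof -
  have "a * (L (d + 1) - L d) = (1 - a) * (L d - L (d - 1))"
    using assms(2) by (simp add: algebra_simps)
  with assms(1) show ?thesis
    by (simp add: field_simps)
qed

lemma harmonic_eq_geometric_sum:
  fixes L :: "int \<Rightarrow> real"
  assumes "0 < a"
    and harmonic: "\<And>d. lo < d \<Longrightarrow> d < hi \<Longrightarrow> L d = a * L (d + 1) + (1 - a) * L (d - 1)"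
    and "lo + int j \<le> hi"
  shows "L (lo + int j) = L lo + (L (lo + 1) - L lo) * (\<Sum>i<j. ((1 - a) / a) ^ i)"
proof -
  have increment: "L (lo + int i + 1) - L (lo + int i) = ((1 - a) / a) ^ i * (L (lo + 1) - L lo)"
    if "lo + int i < hi" for i
    using that
  proof (induction i)
    case (Suc i)
    have "L (lo + int i + 1 + 1) - L (lo + int i + 1)
        = (1 - a) / a * (L (lo + int i + 1) - L (lo + int i))"
      using harmonic_increment[OF assms(1) harmonic[of "lo + int i + 1"]] Suc.prems by simp
    also have "\<dots> = ((1 - a) / a) ^ Suc i * (L (lo + 1) - L lo)"
      using Suc by simp
    finally show ?case
      by (simp add: ac_simps)
  qed simp
  have "L (lo + int j) - L lo = (\<Sum>i<j. L (lo + int i + 1) - L (lo + int i))"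
    using sum_lessThan_telescope[of "\<lambda>i. L (lo + int i)" j] by (simp add: ac_simps)
  also have "\<dots> = (\<Sum>i<j. ((1 - a) / a) ^ i * (L (lo + 1) - L lo))"
    using assms(3) by (intro sum.cong refl increment) auto
  finally show ?thesis
    by (simp add: sum_distrib_left mult.commute)
qed

lemma geometric_sum_double:
  fixes r :: real
  shows "(\<Sum>i<2 * K. r ^ i) = (1 + r ^ K) * (\<Sum>i<K. r ^ i)"
proof -
  have "(\<Sum>i<n + K. r ^ i) = (\<Sum>i<K. r ^ i) + r ^ K * (\<Sum>i<n. r ^ i)" for n
    by (induction n) (simp_all add: algebra_simps power_add)
  from this[of K] show ?thesis
    unfolding mult_2 by (simp add: algebra_simps)
qed

lemma absorption_prob_gamblers_ruin:
  assumes "0 < a" "a \<le> 1" "1 \<le> K"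
  shows "absorption_prob a (int K) 0 1 = 1 / (1 + ((1 - a) / a) ^ K)"
proof -
  define L where "L d = absorption_prob a (int K) d 1" for d
  define S where "S j = (\<Sum>i<j. ((1 - a) / a) ^ i)" for j
  have geometric: "L (- int K + int j) = L (- int K + 1) * S j" if "j \<le> 2 * K" for j
    using harmonic_eq_geometric_sum[of a "- int K" "int K" L j] absorption_prob_harmonic[of a]
      absorption_prob_lower[of "int K" "- int K"] assms that
    by (simp add: L_def S_def)
  have "1 = L (- int K + 1) * S (2 * K)"
    using geometric[of "2 * K"] absorption_prob_upper[of "int K" "int K"] by (simp add: L_def)
  moreover have "L 0 = L (- int K + 1) * S K"
    using geometric[of K] by simp
  moreover have "S (2 * K) = (1 + ((1 - a) / a) ^ K) * S K"
    unfolding S_def by (rule geometric_sum_double)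
  ultimately have "L 0 * (1 + ((1 - a) / a) ^ K) = 1"
    by (simp add: algebra_simps)
  moreover have "1 + ((1 - a) / a) ^ K > 0"
    using assms by (intro add_pos_nonneg zero_le_power) auto
  ultimately show ?thesis
    by (simp add: L_def eq_divide_eq)
qed

lemma up_prob_neg: "up_prob p u (-1) = 1 - up_prob p u 1"
  by (simp add: up_prob_def algebra_simps)

lemma up_prob_bounds:
  assumes "0 < p" "p < 1" "0 \<le> u" "u \<le> 1"
  shows "0 < up_prob p u 1" "up_prob p u 1 < 1"
proof -
  have "up_prob p u 1 = (1 - u) * p + u * (1 - p)" "1 - up_prob p u 1 = (1 - u) * (1 - p) + u * p"
    by (simp_all add: up_prob_def algebra_simps)
  moreover have "0 < (1 - u) * p + u * (1 - p)" "0 < (1 - u) * (1 - p) + u * p"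
    using assms by (cases "u = 1"; simp add: add_pos_nonneg)+
  ultimately show "0 < up_prob p u 1" "up_prob p u 1 < 1"
    by linarith+
qed

lemma rho_eq_up_prob: "rho p u = (1 - up_prob p u 1) / up_prob p u 1"
  by (simp add: rho_def up_prob_def algebra_simps)

lemma rho_pos: "0 < p \<Longrightarrow> p < 1 \<Longrightarrow> 0 \<le> u \<Longrightarrow> u \<le> 1 \<Longrightarrow> 0 < rho p u"
  using up_prob_bounds[of p u] by (simp add: rho_eq_up_prob)

lemma rho_strict_mono:
  assumes "1/2 < p" "p < 1"
  shows "strict_mono_on {0..1} (rho p)"
proof (rule strict_mono_onI)
  fix u u' :: real
  assume "u \<in> {0..1}" "u' \<in> {0..1}" "u < u'"
  moreover have "up_prob p u 1 - up_prob p u' 1 = (u' - u) * (2 * p - 1)"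
    by (simp add: up_prob_def algebra_simps)
  moreover have "0 < (u' - u) * (2 * p - 1)"
    using assms \<open>u < u'\<close> by simp
  ultimately have "up_prob p u' 1 < up_prob p u 1"
    by linarith
  moreover have "0 < up_prob p u' 1"
    using assms \<open>u' \<in> {0..1}\<close> up_prob_bounds[of p u'] by auto
  ultimately have "1 / up_prob p u 1 - 1 < 1 / up_prob p u' 1 - 1"
    by (simp add: frac_less2)
  then show "rho p u < rho p u'"
    using \<open>0 < up_prob p u' 1\<close> \<open>up_prob p u' 1 < up_prob p u 1\<close>
    by (simp add: rho_eq_up_prob diff_divide_distrib)
qed

lemma correct_cascade_prob_k_eq:
  assumes "0 < p" "p < 1" "0 \<le> u" "u \<le> 1" "1 \<le> K"
  shows "correct_cascade_prob_k p u (int K) = 1 / (1 + rho p u ^ K)"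
proof -
  define q where "q = up_prob p u 1"
  have "0 < q" "q < 1"
    using up_prob_bounds[OF assms(1-4)] by (simp_all add: q_def)
  then have "absorption_prob q (int K) 0 1 = 1 / (1 + rho p u ^ K)"
    using absorption_prob_gamblers_ruin[of q K] assms(5) by (simp add: rho_eq_up_prob q_def)
  moreover have "absorption_prob (up_prob p u (-1)) (int K) 0 (-1) = absorption_prob q (int K) 0 1"
    using absorption_prob_mirror[of "int K" q 0] assms(5) by (simp add: up_prob_neg q_def)
  moreover have "correct_cascade_prob_k p u (int K)
    = 1/2 * absorption_prob (up_prob p u (-1)) (int K) 0 (-1) + 1/2 * absorption_prob q (int K) 0 1"
    by (simp add: correct_cascade_prob_k_def absorption_prob_def q_def)
  ultimately show ?thesis
    by linarith
qed

text \<open>The solution \<open>u\<close> of \<open>rho p u = r\<close>.\<close>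
definition flip_of_rho :: "real \<Rightarrow> real \<Rightarrow> real" where
  "flip_of_rho p r = (p * (1 + r) - 1) / ((2 * p - 1) * (1 + r))"

lemma rho_less_iff:
  assumes "1/2 < p" "p < 1" "0 \<le> u" "u \<le> 1" "-1 < r"
  shows "rho p u < r \<longleftrightarrow> u < flip_of_rho p r"
proof -
  have q: "0 < up_prob p u 1"
    using up_prob_bounds[of p u] assms by simp
  have "rho p u < r \<longleftrightarrow> 1 - up_prob p u 1 < r * up_prob p u 1"
    using q by (simp add: rho_eq_up_prob divide_less_eq)
  also have "\<dots> \<longleftrightarrow> u * ((2 * p - 1) * (1 + r)) < p * (1 + r) - 1"
    by (simp add: up_prob_def algebra_simps)
  also have "\<dots> \<longleftrightarrow> u < flip_of_rho p r"
    using assms by (simp add: flip_of_rho_def less_divide_eq)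
  finally show ?thesis .
qed

lemma rho_ge_base:
  assumes "1/2 < p" "p < 1" "0 \<le> u" "u \<le> 1"
  shows "(1 - p) / p \<le> rho p u"
proof -
  have "flip_of_rho p ((1 - p) / p) = 0"
    using assms by (simp add: flip_of_rho_def field_simps)
  moreover have "-1 < (1 - p) / p"
    using assms by (simp add: less_divide_eq)
  ultimately show ?thesis
    using rho_less_iff[OF assms, of "(1 - p) / p"] assms(3) by (simp add: not_less[symmetric])
qed

lemma flip_of_rho_bounds:
  assumes "1/2 < p" "p < 1" "(1 - p) / p < r" "r < 1"
  shows "0 < flip_of_rho p r" "flip_of_rho p r < 1"
proof -
  have "1 < p * (1 + r)"
    using assms by (simp add: divide_less_eq algebra_simps)
  moreover have "p * (1 + r) - 1 < (2 * p - 1) * (1 + r)"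
  proof -
    have "r * (1 - p) < 1 - p"
      using assms by simp
    with assms show ?thesis
      by (simp add: algebra_simps)
  qed
  ultimately show "0 < flip_of_rho p r" "flip_of_rho p r < 1"
    using assms by (simp_all add: flip_of_rho_def divide_less_eq)
qed

lemma v_k_eq_flip_of_rho:
  assumes "1/2 < p" "p < 1" "1 \<le> m"
  shows "v_k p (m + 1) = flip_of_rho p (((1 - p) / p) powr (1 / real m))"
proof -
  define \<alpha> where "\<alpha> = (1 - p) / p"
  define r where "r = \<alpha> powr (1 / real m)"
  have "0 < \<alpha>" "0 < r"
    using assms by (simp_all add: \<alpha>_def r_def)
  have "(real (m + 1) - 2) / (real (m + 1) - 1) = 1 - 1 / real m" "-1 / (real (m + 1) - 1) = - (1 / real m)"
    using assms by (simp_all add: field_simps)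
  moreover have "\<alpha> powr (1 - 1 / real m) = \<alpha> / r" "\<alpha> powr (- (1 / real m)) = 1 / r"
    using \<open>0 < \<alpha>\<close> by (simp_all add: r_def powr_diff powr_minus_divide)
  ultimately have "v_k p (m + 1) = (1 - \<alpha> / r) / (1 - \<alpha> / r + 1 / r - \<alpha>)"
    by (simp add: v_k_def Let_def \<alpha>_def)
  also have "\<dots> = ((r - \<alpha>) / r) / (((1 + r) * (1 - \<alpha>)) / r)"
    using \<open>0 < r\<close> by (simp add: diff_divide_distrib add_divide_distrib algebra_simps)
  also have "\<dots> = (r - \<alpha>) / ((1 + r) * (1 - \<alpha>))"
    using \<open>0 < r\<close> by simp
  also have "\<dots> = ((p * (1 + r) - 1) / p) / (((2 * p - 1) * (1 + r)) / p)"
  proof -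
    have "r - \<alpha> = (p * (1 + r) - 1) / p" "(1 + r) * (1 - \<alpha>) = ((2 * p - 1) * (1 + r)) / p"
      using assms by (simp_all add: \<alpha>_def field_simps)
    then show ?thesis
      by simp
  qed
  also have "\<dots> = flip_of_rho p r"
    using assms by (simp add: flip_of_rho_def)
  finally show ?thesis
    by (simp add: r_def \<alpha>_def)
qed

lemma rr_flip_bounds: "0 < rr_flip eps" "rr_flip eps < 1"
  by (simp_all add: rr_flip_def add_pos_pos)

lemma rr_flip_less_iff: "rr_flip x < rr_flip y \<longleftrightarrow> y < x"
proof -
  have "0 < 1 + exp x" "0 < 1 + exp y"
    by (simp_all add: add_pos_pos)
  then show ?thesis
    by (simp add: rr_flip_def divide_simps)
qed

lemma rr_flip_ln:
  assumes "0 < v" "v < 1"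
  shows "rr_flip (ln ((1 - v) / v)) = v"
  using assms by (simp add: rr_flip_def field_simps)

lemma powr_inverse_bounds:
  fixes \<alpha> :: real
  assumes "0 < \<alpha>" "\<alpha> < 1" "2 \<le> m"
  shows "\<alpha> < \<alpha> powr (1 / real m)" "\<alpha> powr (1 / real m) < 1"
proof -
  have "\<alpha> powr 1 < \<alpha> powr (1 / real m)"
    using assms by (intro powr_less_mono') simp_all
  then show "\<alpha> < \<alpha> powr (1 / real m)"
    using assms by simp
  show "\<alpha> powr (1 / real m) < 1"
    using assms by (simp add: powr01_less_one)
qed

lemma rho_rr_flip_less_iff:
  assumes "1/2 < p" "p < 1" "2 \<le> m"
  shows "rho p (rr_flip eps) < ((1 - p) / p) powr (1 / real m) \<longleftrightarrow> eps_k p (m + 1) < eps"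
proof -
  define r where "r = ((1 - p) / p) powr (1 / real m)"
  define v where "v = v_k p (m + 1)"
  have r: "(1 - p) / p < r" "r < 1"
    using powr_inverse_bounds[of "(1 - p) / p" m] assms by (simp_all add: r_def field_simps)
  then have v: "v = flip_of_rho p r" "0 < v" "v < 1"
    using v_k_eq_flip_of_rho flip_of_rho_bounds assms by (simp_all add: v_def r_def)
  have "0 < (1 - p) / p"
    using assms by simp
  with r(1) have "-1 < r"
    by linarith
  then have "rho p (rr_flip eps) < r \<longleftrightarrow> rr_flip eps < v"
    using rho_less_iff[OF assms(1,2), of "rr_flip eps" r] rr_flip_bounds[of eps] v(1) by simp
  also have "\<dots> \<longleftrightarrow> eps_k p (m + 1) < eps"
    using rr_flip_less_iff[of eps "eps_k p (m + 1)"] rr_flip_ln[OF v(2,3)]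
    by (simp add: eps_k_def v_def)
  finally show ?thesis
    by (simp add: r_def)
qed

lemma floor_log_eq_of_powr_bounds:
  fixes \<alpha> \<rho> :: real
  assumes "0 < \<alpha>" "\<alpha> < 1" "1 \<le> m"
    and lower: "\<alpha> powr (1 / real m) \<le> \<rho>" and upper: "\<rho> < \<alpha> powr (1 / real (m + 1))"
  shows "\<lfloor>log \<rho> \<alpha>\<rfloor> = int m"
proof -
  have "0 < \<alpha> powr (1 / real m)" "\<alpha> powr (1 / real (m + 1)) < 1"
    using assms by (simp_all add: powr01_less_one)
  then have "0 < \<rho>" "\<rho> < 1"
    using lower upper by linarith+
  then have "ln \<rho> < 0"
    by simp
  have "ln (\<alpha> powr (1 / real m)) \<le> ln \<rho>"
    using lower \<open>0 < \<alpha>\<close> \<open>0 < \<rho>\<close> by (subst ln_le_cancel_iff) simp_all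
  then have "ln \<alpha> \<le> real m * ln \<rho>"
    using assms(3) by (simp add: divide_le_eq mult.commute)
  then have "real m \<le> ln \<alpha> / ln \<rho>"
    using \<open>ln \<rho> < 0\<close> by (simp add: le_divide_eq mult.commute)
  have "ln \<rho> < ln (\<alpha> powr (1 / real (m + 1)))"
    using upper \<open>0 < \<alpha>\<close> \<open>0 < \<rho>\<close> by (subst ln_less_cancel_iff) simp_all
  then have "real (m + 1) * ln \<rho> < ln \<alpha>"
    by (simp add: less_divide_eq mult.commute)
  then have "ln \<alpha> / ln \<rho> < real m + 1"
    using \<open>ln \<rho> < 0\<close> by (simp add: divide_less_eq ac_simps)
  with \<open>real m \<le> ln \<alpha> / ln \<rho>\<close> show ?thesis
    by (simp add: log_def floor_eq_iff)
qed

lemma cascade_threshold_rr_flip: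
  assumes p: "1/2 < p" "p < 1" and k: "2 \<le> k" and eps: "eps \<in> eps_interval p k"
  shows "cascade_threshold p (rr_flip eps) = int k"
proof -
  define \<alpha> where "\<alpha> = (1 - p) / p"
  define \<rho> where "\<rho> = rho p (rr_flip eps)"
  have "\<rho> < \<alpha> powr (1 / real k)"
    using rho_rr_flip_less_iff[OF p k] eps by (simp add: eps_interval_def \<rho>_def \<alpha>_def)
  moreover have "\<alpha> powr (1 / real (k - 1)) \<le> \<rho>"
  proof (cases "k = 2")
    case True
    then show ?thesis
      using rho_ge_base[OF p] rr_flip_bounds[of eps] p by (simp add: \<alpha>_def \<rho>_def)
  next
    case False
    then have "2 \<le> k - 1" "k - 1 + 1 = k" "eps \<le> eps_k p k"
      using k eps by (auto simp: eps_interval_def)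
    then show ?thesis
      using rho_rr_flip_less_iff[OF p, of "k - 1" eps] by (simp add: \<alpha>_def \<rho>_def)
  qed
  moreover have "0 < \<alpha>" "\<alpha> < 1"
    using p by (simp_all add: \<alpha>_def)
  ultimately have "\<lfloor>log \<rho> \<alpha>\<rfloor> = int (k - 1)"
    using floor_log_eq_of_powr_bounds[of \<alpha> "k - 1" \<rho>] k by simp
  then show ?thesis
    using k by (simp add: cascade_threshold_def \<alpha>_def \<rho>_def)
qed

lemma correct_cascade_prob_eq:
  assumes "1/2 < p" "p < 1" "2 \<le> k" "eps \<in> eps_interval p k"
  shows "correct_cascade_prob p eps = 1 / (1 + rho p (rr_flip eps) ^ k)"
  using cascade_threshold_rr_flip[OF assms] correct_cascade_prob_k_eq[of p "rr_flip eps" k]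
    rr_flip_bounds[of eps] assms
  by (simp add: correct_cascade_prob_def)

lemma rho_rr_flip_strict_antimono:
  assumes "1/2 < p" "p < 1" "e < e'"
  shows "rho p (rr_flip e') < rho p (rr_flip e)"
  using strict_mono_onD[OF rho_strict_mono[OF assms(1,2)]] rr_flip_bounds rr_flip_less_iff assms(3)
  by (simp add: less_imp_le)

theorem theorem2:
  fixes p :: real and k :: nat
  assumes "1/2 < p" and "p < 1" and "k \<ge> 2"
  shows "(\<forall>eps\<in>eps_interval p k. cascade_threshold p (rr_flip eps) = int k)
         \<and> strict_mono_on (eps_interval p k) (correct_cascade_prob p)"
proof
  show "\<forall>eps\<in>eps_interval p k. cascade_threshold p (rr_flip eps) = int k"
    using cascade_threshold_rr_flip assms by blast
  show "strict_mono_on (eps_interval p k) (correct_cascade_prob p)"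
  proof (rule strict_mono_onI)
    fix e e' assume e: "e \<in> eps_interval p k" and e': "e' \<in> eps_interval p k" and "e < e'"
    have "0 < rho p (rr_flip e')"
      using rho_pos rr_flip_bounds assms by (simp add: less_imp_le)
    moreover have "rho p (rr_flip e') ^ k < rho p (rr_flip e) ^ k"
      using rho_rr_flip_strict_antimono[OF assms(1,2) \<open>e < e'\<close>] \<open>0 < rho p (rr_flip e')\<close> assms(3)
      by (intro power_strict_mono) simp_all
    ultimately show "correct_cascade_prob p e < correct_cascade_prob p e'"
      using correct_cascade_prob_eq[OF assms e] correct_cascade_prob_eq[OF assms e']
      by (simp add: frac_less2 add_pos_nonneg)
  qed
qed

end
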